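(* Let $H$ be a complex infinite-dimensional separable Hilbert space and let $(f_n)_{n=1}^\infty$ be a frame for $H$ with optimal upper frame bound $B$ such that the series $\sum_{n=1}^\infty(B-\|f_n\|^2)$ converges. Then $(f_n)_{n=1}^\infty$ is a near-Riesz basis.
   Context: The optimal upper frame bound of a frame is the infimum of all $B$ with $\sum_n|\langle x,f_n\rangle|^2\le B\|x\|^2$ for all $x\in H$ (note $\|f_n\|^2\le B$ for all $n$). The excess of a frame is the maximal number of elements that can be deleted so that the remaining sequence is still a frame. A near-Riesz basis is a frame with finite excess. *)

theory Defs
  imports "HOL-Analysis.Analysis"
begin

class complex_vector = real_vector +
  fixes scaleC :: "complex \<Rightarrow> 'a \<Rightarrow> 'a"
  assumes scaleC_add_right: "scaleC a (x + y) = scaleC a x + scaleC a y"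
    and scaleC_add_left: "scaleC (a + b) x = scaleC a x + scaleC b x"
    and scaleC_scaleC: "scaleC a (scaleC b x) = scaleC (a * b) x"
    and scaleC_one: "scaleC 1 x = x"
    and scaleR_scaleC: "scaleR r x = scaleC (complex_of_real r) x"

class complex_inner = complex_vector + real_normed_vector +
  fixes cinner :: "'a \<Rightarrow> 'a \<Rightarrow> complex"
  assumes cinner_commute: "cinner x y = cnj (cinner y x)"
    and cinner_add_left: "cinner (x + y) z = cinner x z + cinner y z"
    and cinner_scaleC_left: "cinner (scaleC r x) y = r * cinner x y"
    and cinner_self_real: "Im (cinner x x) = 0"
    and cinner_self_nonneg: "0 \<le> Re (cinner x x)"
    and cinner_self_eq_zero: "cinner x x = 0 \<longleftrightarrow> x = 0"
    and norm_eq_sqrt_cinner: "norm x = sqrt (Re (cinner x x))"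

definition cspan :: "'a::complex_vector set \<Rightarrow> 'a set" where
  "cspan S = {\<Sum>a\<in>T. scaleC (c a) a | T c. finite T \<and> T \<subseteq> S}"

definition infinite_dimensional :: "'a::complex_vector itself \<Rightarrow> bool" where
  "infinite_dimensional _ \<longleftrightarrow> \<not> (\<exists>S::'a set. finite S \<and> cspan S = UNIV)"

definition separable_hilbert :: "'a::topological_space itself \<Rightarrow> bool" where
  "separable_hilbert _ \<longleftrightarrow> (\<exists>D::'a set. countable D \<and> closure D = UNIV)"

definition frame_coeff_sum :: "(nat \<Rightarrow> 'a::complex_inner) \<Rightarrow> nat set \<Rightarrow> 'a \<Rightarrow> real" where
  "frame_coeff_sum f I x = (\<Sum>n. if n \<in> I then (cmod (cinner x (f n)))\<^sup>2 else 0)"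

definition frame_on :: "(nat \<Rightarrow> 'a::complex_inner) \<Rightarrow> nat set \<Rightarrow> bool" where
  "frame_on f I \<longleftrightarrow> (\<exists>A B. 0 < A \<and> (\<forall>x.
      summable (\<lambda>n. if n \<in> I then (cmod (cinner x (f n)))\<^sup>2 else 0) \<and>
      A * (norm x)\<^sup>2 \<le> frame_coeff_sum f I x \<and>
      frame_coeff_sum f I x \<le> B * (norm x)\<^sup>2))"

definition frame :: "(nat \<Rightarrow> 'a::complex_inner) \<Rightarrow> bool" where
  "frame f \<longleftrightarrow> frame_on f UNIV"

definition optimal_upper_frame_bound :: "(nat \<Rightarrow> 'a::complex_inner) \<Rightarrow> real" where
  "optimal_upper_frame_bound f =
     Inf {B. \<forall>x. frame_coeff_sum f UNIV x \<le> B * (norm x)\<^sup>2}"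

text \<open>Near-Riesz basis: a frame with finite excess, i.e. there is a finite
bound N such that whenever a set S of indices is deleted and the remaining
sequence is still a frame, S is finite with at most N elements.\<close>

definition near_riesz_basis :: "(nat \<Rightarrow> 'a::complex_inner) \<Rightarrow> bool" where
  "near_riesz_basis f \<longleftrightarrow> frame f \<and>
     (\<exists>N::nat. \<forall>S. frame_on f (UNIV - S) \<longrightarrow> finite S \<and> card S \<le> N)"

end

theory Submission
  imports Defs
begin

text \<open>
  (1) Testing the upper frame inequality at \<open>x = f n\<close> bounds row \<open>n\<close> of the Gram matrix:
      \<open>\<Sum>\<^sub>m\<^sub>\<noteq>\<^sub>n |\<langle>f n, f m\<rangle>|\<^sup>2 \<le> B (B - \<parallel>f n\<parallel>\<^sup>2)\<close>. A Schur-type estimate then shows that a tail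
      \<open>(f n)\<^sub>n\<^sub>\<ge>\<^sub>N\<close>, where the defects \<open>B - \<parallel>f n\<parallel>\<^sup>2\<close> sum to at most \<open>B/4\<close>, satisfies the lower
      Riesz inequality \<open>B/4 \<cdot> \<Sum>|w n|\<^sup>2 \<le> \<parallel>\<Sum> w n f n\<parallel>\<^sup>2\<close>.
  (2) If \<open>(f n)\<^sub>n\<^sub>\<notin>\<^sub>S\<close> is a frame, its finite linear span is dense (via a best approximation
      in a complete space, whose residual is orthogonal to all \<open>f n\<close>, \<open>n \<notin> S\<close>).
  (3) If more than \<open>N\<close> indices of \<open>S\<close> lay in the tail, approximate each such \<open>f m\<close> by
      vectors outside \<open>S\<close> and use linear algebra (more unknowns than equations) to
      combine the residuals into a tail combination with no components below \<open>N\<close>.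
      Its norm is too small compared with its coefficients, contradicting (1).
  Hence \<open>S\<close> has at most \<open>N\<close> elements in the tail and at most \<open>2 N\<close> in total.
\<close>

lemma scaleC_zero_right [simp]: "scaleC a (0::'a::complex_vector) = 0"
  using scaleC_add_right[of a "0::'a" 0] by simp

lemma scaleC_zero_left [simp]: "scaleC 0 (x::'a::complex_vector) = 0"
  using scaleC_add_left[of 0 0 x] by simp

lemma cinner_zero_left [simp]: "cinner 0 (y::'a::complex_inner) = 0"
  using cinner_add_left[of "0::'a" 0 y] by simp

lemma scaleC_minus_right: "scaleC a (- (x::'a::complex_vector)) = - scaleC a x"
  using scaleC_add_right[of a x "-x"] by (simp add: eq_neg_iff_add_eq_0 add.commute)

lemma scaleC_diff_right: "scaleC a ((x::'a::complex_vector) - y) = scaleC a x - scaleC a y"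
  using scaleC_add_right[of a x "-y"] by (simp add: scaleC_minus_right)

lemma scaleC_minus_left: "scaleC (- a) (x::'a::complex_vector) = - scaleC a x"
  using scaleC_add_left[of a "-a" x] by (simp add: eq_neg_iff_add_eq_0 add.commute)

lemma scaleC_diff_left: "scaleC (a - b) (x::'a::complex_vector) = scaleC a x - scaleC b x"
  using scaleC_add_left[of a "-b" x] by (simp add: scaleC_minus_left)

lemma scaleC_sum_right: "scaleC a (\<Sum>i\<in>A. g i) = (\<Sum>i\<in>A. scaleC a (g i::'a::complex_vector))"
  by (induction A rule: infinite_finite_induct) (auto simp: scaleC_add_right)

lemma scaleC_sum_left: "scaleC (\<Sum>i\<in>A. c i) (x::'a::complex_vector) = (\<Sum>i\<in>A. scaleC (c i) x)"
  by (induction A rule: infinite_finite_induct) (auto simp: scaleC_add_left)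

lemma cinner_add_right: "cinner (x::'a::complex_inner) (y + z) = cinner x y + cinner x z"
  by (metis cinner_add_left cinner_commute complex_cnj_add)

lemma cinner_scaleC_right: "cinner (x::'a::complex_inner) (scaleC r y) = cnj r * cinner x y"
  by (metis cinner_commute cinner_scaleC_left complex_cnj_cnj complex_cnj_mult)

lemma cinner_zero_right [simp]: "cinner (x::'a::complex_inner) 0 = 0"
  using cinner_add_right[of x "0::'a" 0] by simp

lemma cinner_minus_left: "cinner (- x::'a::complex_inner) y = - cinner x y"
  using cinner_add_left[of x "-x" y] by (simp add: eq_neg_iff_add_eq_0 add.commute)

lemma cinner_minus_right: "cinner (x::'a::complex_inner) (- y) = - cinner x y"
  using cinner_add_right[of x y "-y"] by (simp add: eq_neg_iff_add_eq_0 add.commute)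

lemma cinner_diff_left: "cinner ((x::'a::complex_inner) - y) z = cinner x z - cinner y z"
  using cinner_add_left[of x "-y" z] by (simp add: cinner_minus_left)

lemma cinner_diff_right: "cinner (x::'a::complex_inner) (y - z) = cinner x y - cinner x z"
  using cinner_add_right[of x y "-z"] by (simp add: cinner_minus_right)

lemma cinner_sum_left: "cinner (\<Sum>i\<in>A. g i) (z::'a::complex_inner) = (\<Sum>i\<in>A. cinner (g i) z)"
  by (induction A rule: infinite_finite_induct) (auto simp: cinner_add_left)

lemma cinner_sum_right: "cinner (z::'a::complex_inner) (\<Sum>i\<in>A. g i) = (\<Sum>i\<in>A. cinner z (g i))"
  by (subst (1 2) cinner_commute) (simp add: cinner_sum_left)

lemma power2_norm_Re: "(norm (x::'a::complex_inner))\<^sup>2 = Re (cinner x x)"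
  by (simp add: norm_eq_sqrt_cinner cinner_self_nonneg)

lemma cinner_self_norm: "cinner (x::'a::complex_inner) x = complex_of_real ((norm x)\<^sup>2)"
  by (simp add: power2_norm_Re complex_eq_iff cinner_self_real)

lemma cmod_cinner_self: "cmod (cinner (x::'a::complex_inner) x) = (norm x)\<^sup>2"
  by (simp only: cinner_self_norm norm_of_real) simp

lemma norm_scaleC: "norm (scaleC c (x::'a::complex_inner)) = cmod c * norm x"
proof -
  have "cinner (scaleC c x) (scaleC c x) = (c * cnj c) * cinner x x"
    by (simp add: cinner_scaleC_left cinner_scaleC_right mult.assoc)
  also have "\<dots> = complex_of_real ((cmod c)\<^sup>2) * complex_of_real ((norm x)\<^sup>2)"
    by (simp only: complex_norm_square[symmetric] cinner_self_norm)
  also have "\<dots> = complex_of_real ((cmod c)\<^sup>2 * (norm x)\<^sup>2)"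
    by (rule of_real_mult[symmetric])
  finally have "Re (cinner (scaleC c x) (scaleC c x)) = (cmod c)\<^sup>2 * (norm x)\<^sup>2"
    by (simp only: Re_complex_of_real)
  hence "(norm (scaleC c x))\<^sup>2 = (cmod c * norm x)\<^sup>2"
    by (simp only: power2_norm_Re[of "scaleC c x"] power_mult_distrib)
  then show ?thesis by (simp add: power2_eq_iff_nonneg)
qed

lemma Re_cinner_swap: "Re (cinner (y::'a::complex_inner) x) = Re (cinner x y)"
  by (subst cinner_commute) simp

lemma norm_diff_sq:
  "(norm ((x::'a::complex_inner) - y))\<^sup>2 = (norm x)\<^sup>2 - 2 * Re (cinner x y) + (norm y)\<^sup>2"
  by (simp add: power2_norm_Re cinner_diff_left cinner_diff_right Re_cinner_swap)

lemma parallelogram: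
  "(norm ((x::'a::complex_inner) + y))\<^sup>2 + (norm (x - y))\<^sup>2 = 2 * (norm x)\<^sup>2 + 2 * (norm y)\<^sup>2"
  by (simp add: power2_norm_Re cinner_add_left cinner_add_right cinner_diff_left
      cinner_diff_right Re_cinner_swap)

definition lincomb :: "(nat \<Rightarrow> 'a::complex_vector) \<Rightarrow> (nat \<Rightarrow> complex) \<Rightarrow> nat set \<Rightarrow> 'a" where
  "lincomb f a F = (\<Sum>n\<in>F. scaleC (a n) (f n))"

lemma lincomb_extend:
  assumes "finite F'" "F \<subseteq> F'"
  shows "lincomb f a F = lincomb f (\<lambda>n. if n \<in> F then a n else 0) F'"
  unfolding lincomb_def by (rule sum.mono_neutral_cong_left) (use assms in auto)

lemma lincomb_diff_coeff: "lincomb f a F - lincomb f b F = lincomb f (\<lambda>n. a n - b n) F"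
  unfolding lincomb_def by (simp add: scaleC_diff_left sum_subtractf)

lemma lincomb_add:
  assumes "finite F1" "finite F2"
  shows "lincomb f a1 F1 + lincomb f a2 F2 =
    lincomb f (\<lambda>n. (if n \<in> F1 then a1 n else 0) + (if n \<in> F2 then a2 n else 0)) (F1 \<union> F2)"
  using lincomb_extend[of "F1 \<union> F2" F1 f a1] lincomb_extend[of "F1 \<union> F2" F2 f a2] assms
  by (simp add: lincomb_def scaleC_add_left sum.distrib)

lemma lincomb_scale: "scaleC c (lincomb f a F) = lincomb f (\<lambda>n. c * a n) F"
  unfolding lincomb_def by (simp add: scaleC_sum_right scaleC_scaleC)

lemma norm_lincomb_sq_expansion:
  fixes f :: "nat \<Rightarrow> 'a::complex_inner"
  assumes "finite F"
  shows "(norm (lincomb f w F))\<^sup>2 = (\<Sum>n\<in>F. (cmod (w n))\<^sup>2 * (norm (f n))\<^sup>2)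
           + Re (\<Sum>n\<in>F. \<Sum>m\<in>F-{n}. w n * cnj (w m) * cinner (f n) (f m))"
proof -
  have gram: "cinner (lincomb f w F) (lincomb f w F)
      = (\<Sum>n\<in>F. \<Sum>m\<in>F. w n * cnj (w m) * cinner (f n) (f m))"
    unfolding lincomb_def
    by (simp add: cinner_sum_left cinner_sum_right cinner_scaleC_left cinner_scaleC_right
        sum_distrib_left mult.assoc) (subst sum.swap, simp add: ac_simps)
  have row: "(\<Sum>m\<in>F. w n * cnj (w m) * cinner (f n) (f m)) =
      complex_of_real ((cmod (w n))\<^sup>2 * (norm (f n))\<^sup>2)
      + (\<Sum>m\<in>F-{n}. w n * cnj (w m) * cinner (f n) (f m))" if "n \<in> F" for n
  proof -
    have "w n * cnj (w n) * cinner (f n) (f n) = complex_of_real ((cmod (w n))\<^sup>2 * (norm (f n))\<^sup>2)"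
      by (simp add: cinner_self_norm complex_norm_square[symmetric] del: of_real_power)
    then show ?thesis using assms that by (simp add: sum.remove)
  qed
  show ?thesis
    by (simp add: power2_norm_Re gram row sum.distrib)
qed

lemma Cauchy_Schwarz_sqrt:
  fixes a b :: "'i \<Rightarrow> real"
  shows "(\<Sum>i\<in>I. a i * b i) \<le> sqrt (\<Sum>i\<in>I. (a i)\<^sup>2) * sqrt (\<Sum>i\<in>I. (b i)\<^sup>2)"
  using real_le_rsqrt[OF Cauchy_Schwarz_ineq_sum] by (simp add: real_sqrt_mult)

text \<open>Two applications of Cauchy--Schwarz.\<close>

lemma offdiagonal_form_bound:
  fixes G :: "'i \<Rightarrow> 'i \<Rightarrow> complex" and w :: "'i \<Rightarrow> complex"
  assumes F: "finite F"
    and row: "\<And>n. n \<in> F \<Longrightarrow> (\<Sum>m\<in>F-{n}. (cmod (G n m))\<^sup>2) \<le> R n"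
  shows "cmod (\<Sum>n\<in>F. \<Sum>m\<in>F-{n}. w n * cnj (w m) * G n m)
           \<le> (\<Sum>n\<in>F. (cmod (w n))\<^sup>2) * sqrt (\<Sum>n\<in>F. R n)"
proof -
  define W where "W = (\<Sum>n\<in>F. (cmod (w n))\<^sup>2)"
  have W0: "0 \<le> W" by (simp add: W_def sum_nonneg)
  have R0: "0 \<le> R n" if "n \<in> F" for n
    using row[OF that] sum_nonneg[of "F-{n}" "\<lambda>m. (cmod (G n m))\<^sup>2"] by simp
  have row_cs: "(\<Sum>m\<in>F-{n}. cmod (w m) * cmod (G n m)) \<le> sqrt W * sqrt (R n)" if "n \<in> F" for n
  proof -
    have "(\<Sum>m\<in>F-{n}. cmod (w m) * cmod (G n m))
        \<le> sqrt (\<Sum>m\<in>F-{n}. (cmod (w m))\<^sup>2) * sqrt (\<Sum>m\<in>F-{n}. (cmod (G n m))\<^sup>2)"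
      by (rule Cauchy_Schwarz_sqrt)
    also have "\<dots> \<le> sqrt W * sqrt (R n)"
      unfolding W_def using F row[OF that]
      by (intro mult_mono real_sqrt_le_mono sum_mono2) (auto simp: sum_nonneg)
    finally show ?thesis .
  qed
  have "cmod (\<Sum>n\<in>F. \<Sum>m\<in>F-{n}. w n * cnj (w m) * G n m)
      \<le> (\<Sum>n\<in>F. cmod (w n) * (\<Sum>m\<in>F-{n}. cmod (w m) * cmod (G n m)))"
    by (rule order_trans[OF norm_sum], rule sum_mono, rule order_trans[OF norm_sum])
       (simp add: norm_mult sum_distrib_left mult.assoc)
  also have "\<dots> \<le> (\<Sum>n\<in>F. cmod (w n) * (sqrt W * sqrt (R n)))"
    by (intro sum_mono mult_left_mono row_cs) auto
  also have "\<dots> = sqrt W * (\<Sum>n\<in>F. cmod (w n) * sqrt (R n))"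
    by (simp add: sum_distrib_left algebra_simps)
  also have "\<dots> \<le> sqrt W * (sqrt W * sqrt (\<Sum>n\<in>F. R n))"
  proof (rule mult_left_mono)
    have "(\<Sum>n\<in>F. (sqrt (R n))\<^sup>2) = (\<Sum>n\<in>F. R n)" by (intro sum.cong) (auto simp: R0)
    then show "(\<Sum>n\<in>F. cmod (w n) * sqrt (R n)) \<le> sqrt W * sqrt (\<Sum>n\<in>F. R n)"
      using Cauchy_Schwarz_sqrt[of "\<lambda>n. cmod (w n)" "\<lambda>n. sqrt (R n)" F] by (simp add: W_def)
  qed (rule real_sqrt_ge_zero[OF W0])
  also have "\<dots> = W * sqrt (\<Sum>n\<in>F. R n)"
    using W0 by (simp add: mult.assoc[symmetric])
  finally show ?thesis by (simp add: W_def)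
qed

lemma optimal_bound_is_upper_bound:
  assumes "frame f" "B = optimal_upper_frame_bound f"
  shows "frame_coeff_sum f UNIV x \<le> B * (norm x)\<^sup>2"
proof (cases "x = 0")
  case True
  then show ?thesis by (simp add: frame_coeff_sum_def)
next
  case False
  define U where "U = {B. \<forall>x. frame_coeff_sum f UNIV x \<le> B * (norm x)\<^sup>2}"
  from assms(1) have "U \<noteq> {}" unfolding frame_def frame_on_def U_def by blast
  from False have np: "0 < (norm x)\<^sup>2" by simp
  have "frame_coeff_sum f UNIV x / (norm x)\<^sup>2 \<le> Inf U"
    by (rule cInf_greatest[OF \<open>U \<noteq> {}\<close>]) (use np in \<open>auto simp: U_def divide_le_eq\<close>)
  moreover have "Inf U = B" using assms(2) by (simp add: optimal_upper_frame_bound_def U_def)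
  ultimately show ?thesis using np by (simp add: divide_le_eq)
qed

lemma optimal_bound_pos:
  fixes f :: "nat \<Rightarrow> 'a::complex_inner"
  assumes "frame f" "B = optimal_upper_frame_bound f" "(x::'a) \<noteq> 0"
  shows "0 < B"
proof -
  from assms(1) obtain A where A: "0 < A" "A * (norm x)\<^sup>2 \<le> frame_coeff_sum f UNIV x"
    unfolding frame_def frame_on_def by blast
  then have "A * (norm x)\<^sup>2 \<le> B * (norm x)\<^sup>2"
    using optimal_bound_is_upper_bound[OF assms(1,2), of x] by linarith
  with assms(3) have "A \<le> B" by simp
  with A(1) show ?thesis by linarith
qed

text \<open>Testing the upper frame inequality with \<open>x = f n\<close>: the diagonal entry and the
  off-diagonal part of row \<open>n\<close> of the Gram matrix together are at most \<open>B \<parallel>f n\<parallel>\<^sup>2\<close>.\<close>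

lemma gram_row_bound:
  assumes "frame f" "B = optimal_upper_frame_bound f" "finite F"
  shows "(norm (f n))\<^sup>2 * (norm (f n))\<^sup>2 + (\<Sum>m\<in>F-{n}. (cmod (cinner (f n) (f m)))\<^sup>2)
           \<le> B * (norm (f n))\<^sup>2"
proof -
  let ?g = "\<lambda>m. (cmod (cinner (f n) (f m)))\<^sup>2"
  have "summable ?g" using assms(1) unfolding frame_def frame_on_def by auto
  have "?g n + (\<Sum>m\<in>F-{n}. ?g m) = (\<Sum>m\<in>insert n (F-{n}). ?g m)"
    using assms(3) by (simp add: sum.insert_remove)
  also have "\<dots> \<le> (\<Sum>m. ?g m)"
    by (rule sum_le_suminf[OF \<open>summable ?g\<close>]) (use assms(3) in auto)
  also have "\<dots> \<le> B * (norm (f n))\<^sup>2"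
    using optimal_bound_is_upper_bound[OF assms(1,2)] by (simp add: frame_coeff_sum_def)
  finally show ?thesis by (simp add: cmod_cinner_self power2_eq_square)
qed

lemma norm_sq_le_optimal_bound:
  assumes "frame f" "B = optimal_upper_frame_bound f" "0 \<le> B"
  shows "(norm (f n))\<^sup>2 \<le> B"
proof (cases "f n = 0")
  case False
  have "(norm (f n))\<^sup>2 * (norm (f n))\<^sup>2 \<le> B * (norm (f n))\<^sup>2"
    using gram_row_bound[OF assms(1,2), of "{}" n] by simp
  moreover have "0 < (norm (f n))\<^sup>2" using False by simp
  ultimately show ?thesis by (metis mult_le_cancel_right_pos)
qed (use assms(3) in simp)

lemma gram_offdiagonal_row_bound:
  assumes "frame f" "B = optimal_upper_frame_bound f" "0 \<le> B" "finite F"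
  shows "(\<Sum>m\<in>F-{n}. (cmod (cinner (f n) (f m)))\<^sup>2) \<le> B * (B - (norm (f n))\<^sup>2)"
proof -
  have "(\<Sum>m\<in>F-{n}. (cmod (cinner (f n) (f m)))\<^sup>2) \<le> (norm (f n))\<^sup>2 * (B - (norm (f n))\<^sup>2)"
    using gram_row_bound[OF assms(1,2,4), of n] by (simp add: algebra_simps)
  also have "\<dots> \<le> B * (B - (norm (f n))\<^sup>2)"
    using norm_sq_le_optimal_bound[OF assms(1-3)] by (intro mult_right_mono) auto
  finally show ?thesis .
qed

lemma lower_riesz_bound_small_defect:
  fixes f :: "nat \<Rightarrow> 'a::complex_inner"
  assumes fr: "frame f" "B = optimal_upper_frame_bound f" "0 \<le> B"
    and F: "finite F" and defect: "(\<Sum>n\<in>F. B - (norm (f n))\<^sup>2) \<le> \<eta>"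
  shows "(B - \<eta> - sqrt (B * \<eta>)) * (\<Sum>n\<in>F. (cmod (w n))\<^sup>2) \<le> (norm (lincomb f w F))\<^sup>2"
proof -
  define W where "W = (\<Sum>n\<in>F. (cmod (w n))\<^sup>2)"
  define off where "off = (\<Sum>n\<in>F. \<Sum>m\<in>F-{n}. w n * cnj (w m) * cinner (f n) (f m))"
  have q0: "0 \<le> B - (norm (f n))\<^sup>2" for n using norm_sq_le_optimal_bound[OF fr] by simp
  have "cmod off \<le> W * sqrt (\<Sum>n\<in>F. B * (B - (norm (f n))\<^sup>2))"
    unfolding off_def W_def
    by (rule offdiagonal_form_bound[OF F gram_offdiagonal_row_bound[OF fr F]])
  also have "\<dots> \<le> W * sqrt (B * \<eta>)"
    using defect fr(3) by (intro mult_left_mono real_sqrt_le_mono)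
      (auto simp: W_def sum_nonneg sum_distrib_left[symmetric] mult_left_mono)
  finally have off_bound: "cmod off \<le> W * sqrt (B * \<eta>)" .
  have "B - \<eta> \<le> (norm (f n))\<^sup>2" if "n \<in> F" for n
    using member_le_sum[of n F "\<lambda>n. B - (norm (f n))\<^sup>2"] q0 F that defect by simp
  then have "(\<Sum>n\<in>F. (cmod (w n))\<^sup>2 * (B - \<eta>)) \<le> (\<Sum>n\<in>F. (cmod (w n))\<^sup>2 * (norm (f n))\<^sup>2)"
    by (intro sum_mono mult_left_mono) auto
  then have diag_bound: "(B - \<eta>) * W \<le> (\<Sum>n\<in>F. (cmod (w n))\<^sup>2 * (norm (f n))\<^sup>2)"
    by (simp add: W_def sum_distrib_left mult.commute)
  have "- cmod off \<le> Re off" using abs_Re_le_cmod[of off] by linarith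
  moreover have "(B - \<eta> - sqrt (B * \<eta>)) * W = (B - \<eta>) * W - W * sqrt (B * \<eta>)"
    by (simp add: algebra_simps)
  moreover have "(norm (lincomb f w F))\<^sup>2 = (\<Sum>n\<in>F. (cmod (w n))\<^sup>2 * (norm (f n))\<^sup>2) + Re off"
    unfolding off_def by (rule norm_lincomb_sq_expansion[OF F])
  ultimately show ?thesis
    using off_bound diag_bound unfolding W_def by linarith
qed

lemma small_tail_sums:
  fixes q :: "nat \<Rightarrow> real"
  assumes "summable q" "\<And>n. 0 \<le> q n" "0 < e"
  obtains N where "\<And>F. finite F \<Longrightarrow> F \<subseteq> {N..} \<Longrightarrow> sum q F < e"
proof -
  obtain N where N: "\<And>m n. N \<le> m \<Longrightarrow> norm (sum q {m..<n}) < e"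
    using assms(1,3) unfolding summable_Cauchy by blast
  have "sum q F < e" if F: "finite F" "F \<subseteq> {N..}" for F
  proof (cases "F = {}")
    case False
    with F have "F \<subseteq> {N..<Suc (Max F)}" by (auto simp: less_Suc_eq_le)
    then have "sum q F \<le> sum q {N..<Suc (Max F)}" by (intro sum_mono2) (auto simp: assms(2))
    also have "\<dots> < e" using N[of N "Suc (Max F)"] by simp
    finally show ?thesis .
  qed (use assms(3) in simp)
  then show ?thesis by (rule that)
qed

text \<open>Under the hypothesis of the theorem, a tail \<open>(f n)\<^sub>n\<^sub>\<ge>\<^sub>N\<close> satisfies a lower
  Riesz inequality with constant \<open>B/4\<close> (take \<open>\<eta> = B/4\<close> above).\<close>

lemma tail_lower_riesz_bound:
  fixes f :: "nat \<Rightarrow> 'a::complex_inner"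
  assumes fr: "frame f" "B = optimal_upper_frame_bound f" and B0: "0 < B"
    and sum: "summable (\<lambda>n. B - (norm (f n))\<^sup>2)"
  obtains N where "\<And>F w. finite F \<Longrightarrow> F \<subseteq> {N..} \<Longrightarrow>
    B / 4 * (\<Sum>n\<in>F. (cmod (w n))\<^sup>2) \<le> (norm (lincomb f w F))\<^sup>2"
proof -
  have q0: "0 \<le> B - (norm (f n))\<^sup>2" for n using norm_sq_le_optimal_bound[OF fr] B0 by simp
  obtain N where N: "\<And>F. finite F \<Longrightarrow> F \<subseteq> {N..} \<Longrightarrow>
      (\<Sum>n\<in>F. B - (norm (f n))\<^sup>2) < B / 4"
    by (rule small_tail_sums[of "\<lambda>n. B - (norm (f n))\<^sup>2" "B / 4"]) (use sum B0 q0 in auto)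
  have "sqrt (B * (B / 4)) = B / 2"
    using B0 by (simp add: real_sqrt_mult real_sqrt_divide)
  then have "B - B / 4 - sqrt (B * (B / 4)) = B / 4" by simp
  then show ?thesis
    using lower_riesz_bound_small_defect[OF fr less_imp_le[OF B0] _ less_imp_le[OF N]] that
    by metis
qed

definition complex_subspace :: "'a::complex_vector set \<Rightarrow> bool" where
  "complex_subspace M \<longleftrightarrow> 0 \<in> M \<and> (\<forall>u\<in>M. \<forall>v\<in>M. u + v \<in> M) \<and> (\<forall>c. \<forall>u\<in>M. scaleC c u \<in> M)"

lemma lincomb_span_subspace: "complex_subspace {lincomb f a F | a F. finite F \<and> F \<subseteq> I}"
  unfolding complex_subspace_def
proof (intro conjI ballI allI)
  show "0 \<in> {lincomb f a F | a F. finite F \<and> F \<subseteq> I}"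
    by (rule CollectI, rule exI[of _ "\<lambda>_. 0"], rule exI[of _ "{}"]) (simp add: lincomb_def)
next
  fix u v assume "u \<in> {lincomb f a F | a F. finite F \<and> F \<subseteq> I}" "v \<in> {lincomb f a F | a F. finite F \<and> F \<subseteq> I}"
  then obtain a1 F1 a2 F2 where "u = lincomb f a1 F1" "finite F1" "F1 \<subseteq> I"
    "v = lincomb f a2 F2" "finite F2" "F2 \<subseteq> I" by blast
  then show "u + v \<in> {lincomb f a F | a F. finite F \<and> F \<subseteq> I}"
    using lincomb_add[of F1 F2 f a1 a2] by blast
next
  fix c u assume "u \<in> {lincomb f a F | a F. finite F \<and> F \<subseteq> I}"
  then show "scaleC c u \<in> {lincomb f a F | a F. finite F \<and> F \<subseteq> I}"
    by (auto simp: lincomb_scale) blast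
qed

lemma Cauchy_if_dist_le_sum:
  fixes z :: "nat \<Rightarrow> 'a::metric_space" and b :: "nat \<Rightarrow> real"
  assumes b: "b \<longlonglongrightarrow> 0" and d: "\<And>m n. dist (z m) (z n) \<le> b m + b n"
  shows "Cauchy z"
proof (rule metric_CauchyI)
  fix e :: real assume "0 < e"
  then have "\<exists>N. \<forall>n\<ge>N. norm (b n - 0) < e / 2" by (intro LIMSEQ_D[OF b]) simp
  then obtain N where N: "\<And>n. N \<le> n \<Longrightarrow> \<bar>b n\<bar> < e / 2" by auto
  have "dist (z m) (z n) < e" if "N \<le> m" "N \<le> n" for m n
    using d[of m n] N[OF that(1)] N[OF that(2)] by linarith
  then show "\<exists>N. \<forall>m\<ge>N. \<forall>n\<ge>N. dist (z m) (z n) < e" by blast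
qed

text \<open>A minimizing sequence for the distance from \<open>y\<close> to a subspace is Cauchy; this is
  the parallelogram-law argument behind the projection theorem.\<close>

lemma minimizing_sequence_Cauchy:
  fixes M :: "'a::complex_inner set"
  assumes M: "complex_subspace M" and low: "\<And>u. u \<in> M \<Longrightarrow> d \<le> (norm (y - u))\<^sup>2"
    and zM: "\<And>j. z j \<in> M" and zd: "\<And>j. (norm (y - z j))\<^sup>2 \<le> d + e j" and e: "e \<longlonglongrightarrow> 0"
  shows "Cauchy z"
proof (rule Cauchy_if_dist_le_sum)
  have e0: "0 \<le> e j" for j using low[OF zM[of j]] zd[of j] by linarith
  have sq: "(norm (z i - z j))\<^sup>2 \<le> 2 * e i + 2 * e j" for i j
  proof -
    define m where "m = scaleR (1/2) (z i + z j)"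
    have "m \<in> M" using M zM unfolding complex_subspace_def m_def scaleR_scaleC by blast
    have "(y - z i) + (y - z j) = scaleR 2 (y - m)"
      by (simp add: m_def scaleR_right_diff_distrib scaleR_2)
    then have "(norm ((y - z i) + (y - z j)))\<^sup>2 = 4 * (norm (y - m))\<^sup>2"
      by (simp add: power_mult_distrib)
    moreover have "(norm ((y - z i) - (y - z j)))\<^sup>2 = (norm (z i - z j))\<^sup>2"
      using norm_minus_commute[of "z j" "z i"] by simp
    ultimately show ?thesis
      using parallelogram[of "y - z i" "y - z j"] low[OF \<open>m \<in> M\<close>] zd[of i] zd[of j] by linarith
  qed
  show "dist (z m) (z n) \<le> sqrt (2 * e m) + sqrt (2 * e n)" for m n
  proof -
    have "dist (z m) (z n) = sqrt ((norm (z m - z n))\<^sup>2)" by (simp add: dist_norm)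
    also have "\<dots> \<le> sqrt (2 * e m + 2 * e n)" by (rule real_sqrt_le_mono[OF sq])
    also have "\<dots> \<le> sqrt (2 * e m) + sqrt (2 * e n)" by (rule sqrt_add_le_add_sqrt) (use e0 in auto)
    finally show ?thesis .
  qed
  show "(\<lambda>j. sqrt (2 * e j)) \<longlonglongrightarrow> 0"
    using tendsto_real_sqrt[OF tendsto_mult[OF tendsto_const e, of 2]] by simp
qed

lemma best_approximation:
  fixes M :: "'a::{complex_inner, complete_space} set"
  assumes M: "complex_subspace M"
  obtains zs where "zs \<in> closure M" "\<And>u. u \<in> M \<Longrightarrow> norm (y - zs) \<le> norm (y - zs - u)"
proof -
  define X where "X = {(norm (y - u))\<^sup>2 | u. u \<in> M}"
  define d where "d = Inf X"
  have "X \<noteq> {}" using M unfolding X_def complex_subspace_def by blast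
  have low: "d \<le> (norm (y - u))\<^sup>2" if "u \<in> M" for u
    unfolding d_def by (rule cInf_lower) (use that in \<open>auto simp: X_def intro: bdd_belowI[of _ 0]\<close>)
  have "\<exists>u\<in>M. (norm (y - u))\<^sup>2 < d + inverse (real (Suc j))" for j
    using cInf_lessD[OF \<open>X \<noteq> {}\<close>, of "d + inverse (real (Suc j))"] by (auto simp: d_def X_def)
  then obtain z where zM: "\<And>j. z j \<in> M"
    and zd: "\<And>j. (norm (y - z j))\<^sup>2 < d + inverse (real (Suc j))"
    by metis
  have e: "(\<lambda>j. inverse (real (Suc j))) \<longlonglongrightarrow> 0" by (rule LIMSEQ_inverse_real_of_nat)
  have "Cauchy z"
    by (rule minimizing_sequence_Cauchy[OF M low zM less_imp_le[OF zd] e])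
  then obtain zs where zs: "z \<longlonglongrightarrow> zs" using Cauchy_convergent_iff convergent_def by blast
  have "zs \<in> closure M" using zM zs by (auto simp: closure_sequential)
  moreover have "norm (y - zs) \<le> norm (y - zs - u)" if "u \<in> M" for u
  proof -
    have "(norm (y - zs))\<^sup>2 \<le> d"
    proof (rule LIMSEQ_le)
      show "(\<lambda>j. (norm (y - z j))\<^sup>2) \<longlonglongrightarrow> (norm (y - zs))\<^sup>2" by (intro tendsto_intros zs)
      show "(\<lambda>j. d + inverse (real (Suc j))) \<longlonglongrightarrow> d" using tendsto_add[OF tendsto_const e] by simp
    qed (use zd less_imp_le in blast)
    also have "d \<le> (norm (y - zs - u))\<^sup>2"
    proof (rule LIMSEQ_le_const)
      have "(\<lambda>j. y - (z j + u)) \<longlonglongrightarrow> y - zs - u"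
        using tendsto_diff[OF tendsto_const tendsto_add[OF zs tendsto_const]] by (simp add: diff_diff_eq)
      then show "(\<lambda>j. (norm (y - (z j + u)))\<^sup>2) \<longlonglongrightarrow> (norm (y - zs - u))\<^sup>2"
        by (rule tendsto_power[OF tendsto_norm])
      have "z j + u \<in> M" for j using M zM that unfolding complex_subspace_def by blast
      then show "\<exists>N. \<forall>j\<ge>N. d \<le> (norm (y - (z j + u)))\<^sup>2" using low by blast
    qed
    finally show ?thesis by (rule power2_le_imp_le) simp
  qed
  ultimately show ?thesis by (rule that)
qed

lemma orthogonal_if_minimal_norm:
  fixes r v :: "'a::complex_inner"
  assumes min: "\<And>t. norm r \<le> norm (r - scaleC t v)"
  shows "cinner r v = 0"
proof -
  define c where "c = cinner r v"
  define s where "s = 1 / ((norm v)\<^sup>2 + 1)"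
  have p: "0 < (norm v)\<^sup>2 + 1" by (simp add: add_nonneg_pos)
  have s0: "0 < s" and s1: "s * (norm v)\<^sup>2 < 1" using p by (simp_all add: s_def field_simps)
  define t where "t = complex_of_real s * c"
  have "cinner r (scaleC t v) = complex_of_real (s * (cmod c)\<^sup>2)"
  proof -
    have "cnj c * c = complex_of_real ((cmod c)\<^sup>2)"
      by (simp add: complex_norm_square mult.commute del: of_real_power)
    then show ?thesis
      by (simp add: cinner_scaleC_right t_def c_def[symmetric] mult.assoc del: of_real_power)
  qed
  then have "(norm (r - scaleC t v))\<^sup>2 = (norm r)\<^sup>2 - 2 * (s * (cmod c)\<^sup>2) + (s * cmod c)\<^sup>2 * (norm v)\<^sup>2"
    by (simp add: norm_diff_sq norm_scaleC t_def abs_of_pos s0 norm_mult power_mult_distrib)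
  moreover have "(norm r)\<^sup>2 \<le> (norm (r - scaleC t v))\<^sup>2" using min[of t] by (simp add: power_mono)
  ultimately have "2 * (s * (cmod c)\<^sup>2) \<le> s * (cmod c)\<^sup>2 * (s * (norm v)\<^sup>2)"
    by (simp add: power_mult_distrib power2_eq_square algebra_simps)
  also have "\<dots> \<le> s * (cmod c)\<^sup>2 * 1" using s1 s0 by (intro mult_left_mono) auto
  finally have "(cmod c)\<^sup>2 \<le> 0" using s0 by (simp add: mult_le_0_iff)
  then show ?thesis by (simp add: c_def)
qed

text \<open>The finite linear combinations of a frame are dense: otherwise the residual of a
  best approximation would be a nonzero vector orthogonal to all frame vectors,
  contradicting the lower frame bound.\<close>

lemma frame_span_dense:
  fixes f :: "nat \<Rightarrow> 'a::{complex_inner, complete_space}"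
  assumes fr: "frame_on f I" and "0 < \<delta>"
  shows "\<exists>a F. finite F \<and> F \<subseteq> I \<and> norm (y - lincomb f a F) < \<delta>"
proof (rule ccontr)
  define M where "M = {lincomb f a F | a F. finite F \<and> F \<subseteq> I}"
  assume "\<not> ?thesis"
  then have far: "M \<subseteq> {u. \<delta> \<le> norm (y - u)}" by (auto simp: M_def not_less)
  obtain zs where zs: "zs \<in> closure M" and min: "\<And>u. u \<in> M \<Longrightarrow> norm (y - zs) \<le> norm (y - zs - u)"
    by (rule best_approximation[OF lincomb_span_subspace[of f I, folded M_def], where y=y]) blast
  have "closed {u. \<delta> \<le> norm (y - u)}"
    by (intro closed_Collect_le continuous_intros)
  with far have "closure M \<subseteq> {u. \<delta> \<le> norm (y - u)}" by (rule closure_minimal)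
  with zs have "\<delta> \<le> norm (y - zs)" by auto
  have orth: "cinner (y - zs) (f n) = 0" if "n \<in> I" for n
  proof (rule orthogonal_if_minimal_norm)
    fix t
    have "scaleC t (f n) = lincomb f (\<lambda>_. t) {n}" by (simp add: lincomb_def)
    then have "scaleC t (f n) \<in> M" using that by (auto simp: M_def)
    then show "norm (y - zs) \<le> norm (y - zs - scaleC t (f n))" by (rule min)
  qed
  from fr obtain A where A: "0 < A" "A * (norm (y - zs))\<^sup>2 \<le> frame_coeff_sum f I (y - zs)"
    unfolding frame_on_def by blast
  have "(\<lambda>n. if n \<in> I then (cmod (cinner (y - zs) (f n)))\<^sup>2 else 0) = (\<lambda>_. 0)"
    using orth by auto
  then have "frame_coeff_sum f I (y - zs) = 0" by (simp add: frame_coeff_sum_def)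
  with A have "norm (y - zs) = 0" by (simp add: zero_less_mult_iff mult_le_0_iff)
  with \<open>\<delta> \<le> norm (y - zs)\<close> \<open>0 < \<delta>\<close> show False by simp
qed

lemma underdetermined_system_solvable:
  fixes g :: "nat \<Rightarrow> nat \<Rightarrow> complex"
  assumes "finite J" "finite T" "card J < card T"
  shows "\<exists>l. (\<exists>m\<in>T. l m \<noteq> 0) \<and> (\<forall>i\<in>J. (\<Sum>m\<in>T. l m * g m i) = 0)"
  using assms
proof (induction J arbitrary: T g rule: finite_induct)
  case empty
  then obtain m where "m \<in> T" by fastforce
  then show ?case by (intro exI[of _ "\<lambda>_. 1"]) auto
next
  case (insert j J)
  show ?case
  proof (cases "\<forall>m\<in>T. g m j = 0")
    case True
    from insert.IH[of T g] insert.prems insert.hyps obtain l where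
      "\<exists>m\<in>T. l m \<noteq> 0" "\<forall>i\<in>J. (\<Sum>m\<in>T. l m * g m i) = 0" by auto
    with True show ?thesis by (intro exI[of _ l]) auto
  next
    case False
    text \<open>Eliminate the unknown \<open>m0\<close> using equation \<open>j\<close>, then solve the smaller system.\<close>
    then obtain m0 where m0: "m0 \<in> T" "g m0 j \<noteq> 0" by blast
    define T' where "T' = T - {m0}"
    define g' where "g' m i = g m i - (g m j / g m0 j) * g m0 i" for m i
    have "card J < card T'" using insert.prems insert.hyps m0 by (simp add: T'_def)
    with insert.IH[of T' g'] insert.prems obtain \<mu> where
      \<mu>: "\<exists>m\<in>T'. \<mu> m \<noteq> 0" "\<forall>i\<in>J. (\<Sum>m\<in>T'. \<mu> m * g' m i) = 0" by (auto simp: T'_def)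
    define l where "l m = (if m = m0 then - (\<Sum>m\<in>T'. \<mu> m * g m j) / g m0 j else \<mu> m)" for m
    have reduced: "(\<Sum>m\<in>T. l m * g m i) = (\<Sum>m\<in>T'. \<mu> m * g' m i)" for i
    proof -
      have "(\<Sum>m\<in>T. l m * g m i) = l m0 * g m0 i + (\<Sum>m\<in>T'. \<mu> m * g m i)"
        using m0 insert.prems by (simp add: T'_def sum.remove l_def)
      also have "\<dots> = (\<Sum>m\<in>T'. \<mu> m * g m i) - (\<Sum>m\<in>T'. \<mu> m * g m j) * (g m0 i / g m0 j)"
        by (simp add: l_def)
      also have "\<dots> = (\<Sum>m\<in>T'. \<mu> m * g' m i)"
      proof -
        have "\<mu> m * g' m i = \<mu> m * g m i - (\<mu> m * g m j) * (g m0 i / g m0 j)" for m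
          by (simp add: g'_def algebra_simps)
        then show ?thesis by (simp only: sum_subtractf sum_distrib_right)
      qed
      finally show ?thesis .
    qed
    have "(\<Sum>m\<in>T'. \<mu> m * g' m j) = 0" using m0 by (simp add: g'_def)
    then have "\<forall>i\<in>insert j J. (\<Sum>m\<in>T. l m * g m i) = 0" using \<mu>(2) reduced by auto
    moreover have "\<exists>m\<in>T. l m \<noteq> 0" using \<mu>(1) by (auto simp: l_def T'_def)
    ultimately show ?thesis by blast
  qed
qed

lemma lincomb_of_residuals:
  assumes Fa: "finite Fa" "T \<subseteq> Fa" "\<And>m. m \<in> T \<Longrightarrow> F m \<subseteq> Fa"
  shows "(\<Sum>m\<in>T. scaleC (l m) (f m - lincomb f (a m) (F m))) =
    lincomb f (\<lambda>n. (if n \<in> T then l n else 0) - (\<Sum>m\<in>T. l m * (if n \<in> F m then a m n else 0))) Fa"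
proof -
  have "finite T" using Fa finite_subset by blast
  have main: "lincomb f (\<lambda>n. if n \<in> T then l n else 0) Fa = (\<Sum>m\<in>T. scaleC (l m) (f m))"
    using lincomb_extend[of Fa T f l] Fa by (simp add: lincomb_def)
  have "lincomb f (\<lambda>n. \<Sum>m\<in>T. l m * (if n \<in> F m then a m n else 0)) Fa
      = (\<Sum>m\<in>T. scaleC (l m) (lincomb f (\<lambda>n. if n \<in> F m then a m n else 0) Fa))"
    unfolding lincomb_def
    by (simp add: scaleC_sum_left scaleC_sum_right scaleC_scaleC) (rule sum.swap)
  also have "\<dots> = (\<Sum>m\<in>T. scaleC (l m) (lincomb f (a m) (F m)))"
    using lincomb_extend[of Fa "F _" f "a _"] Fa by (intro sum.cong) auto
  finally show ?thesis
    by (simp only: lincomb_diff_coeff[symmetric] main scaleC_diff_right sum_subtractf)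
qed

lemma norm_weighted_sum_sq:
  fixes e :: "'i \<Rightarrow> 'a::complex_inner"
  shows "(norm (\<Sum>m\<in>T. scaleC (l m) (e m)))\<^sup>2 \<le> (\<Sum>m\<in>T. (cmod (l m))\<^sup>2) * (\<Sum>m\<in>T. (norm (e m))\<^sup>2)"
proof -
  have "norm (\<Sum>m\<in>T. scaleC (l m) (e m)) \<le> (\<Sum>m\<in>T. cmod (l m) * norm (e m))"
    using norm_sum[of "\<lambda>m. scaleC (l m) (e m)" T] by (simp add: norm_scaleC)
  also have "\<dots> \<le> sqrt (\<Sum>m\<in>T. (cmod (l m))\<^sup>2) * sqrt (\<Sum>m\<in>T. (norm (e m))\<^sup>2)"
    by (rule Cauchy_Schwarz_sqrt)
  finally have "(norm (\<Sum>m\<in>T. scaleC (l m) (e m)))\<^sup>2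
      \<le> (sqrt (\<Sum>m\<in>T. (cmod (l m))\<^sup>2) * sqrt (\<Sum>m\<in>T. (norm (e m))\<^sup>2))\<^sup>2"
    by (rule power_mono) simp
  also have "\<dots> = (\<Sum>m\<in>T. (cmod (l m))\<^sup>2) * (\<Sum>m\<in>T. (norm (e m))\<^sup>2)"
    by (simp add: power_mult_distrib sum_nonneg)
  finally show ?thesis .
qed

text \<open>If \<open>card T > N\<close>, a nontrivial combination
  of the residuals can be chosen to have no component below \<open>N\<close>; it is then a tail
  combination whose norm is small compared with its coefficients -- a contradiction.\<close>

lemma approximable_tail_card_bound:
  fixes f :: "nat \<Rightarrow> 'a::complex_inner"
  assumes riesz: "\<And>F w. finite F \<Longrightarrow> F \<subseteq> {N..} \<Longrightarrow>
      c * (\<Sum>n\<in>F. (cmod (w n))\<^sup>2) \<le> (norm (lincomb f w F))\<^sup>2"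
    and T: "finite T" "T \<subseteq> {N..}"
    and F: "\<And>m. m \<in> T \<Longrightarrow> finite (F m) \<and> F m \<inter> T = {}"
    and small: "(\<Sum>m\<in>T. (norm (f m - lincomb f (a m) (F m)))\<^sup>2) < c"
  shows "card T \<le> N"
proof (rule ccontr)
  assume "\<not> card T \<le> N"
  define g where "g m j = (if j \<in> F m then a m j else 0)" for m j
  obtain l where l_nonzero: "\<exists>m\<in>T. l m \<noteq> 0" and l_kills: "\<forall>j\<in>{..<N}. (\<Sum>m\<in>T. l m * g m j) = 0"
    using underdetermined_system_solvable[of "{..<N}" T g] T(1) \<open>\<not> card T \<le> N\<close> by auto
  define Fa where "Fa = T \<union> (\<Union>m\<in>T. F m)"
  define w where "w n = (if n \<in> T then l n else 0) - (\<Sum>m\<in>T. l m * g m n)" for n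
  define F' where "F' = Fa - {..<N}"
  have "finite Fa" using T(1) F by (auto simp: Fa_def)
  have w_below: "w n = 0" if "n < N" for n
  proof -
    have "n \<notin> T" using T(2) that by auto
    then show ?thesis using l_kills that by (simp add: w_def)
  qed
  have w_T: "w m = l m" if "m \<in> T" for m
  proof -
    have "g m' m = 0" if "m' \<in> T" for m' using F[OF that] \<open>m \<in> T\<close> by (auto simp: g_def)
    then show ?thesis using that by (simp add: w_def)
  qed
  have "(\<Sum>m\<in>T. scaleC (l m) (f m - lincomb f (a m) (F m))) = lincomb f w Fa"
    unfolding w_def g_def by (rule lincomb_of_residuals) (use \<open>finite Fa\<close> in \<open>auto simp: Fa_def\<close>)
  also have "\<dots> = lincomb f w F'"
    unfolding lincomb_def F'_def
    by (rule sum.mono_neutral_right) (use \<open>finite Fa\<close> w_below in auto)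
  finally have residual: "(\<Sum>m\<in>T. scaleC (l m) (f m - lincomb f (a m) (F m))) = lincomb f w F'" .
  define P where "P = (\<Sum>m\<in>T. (cmod (l m))\<^sup>2)"
  have "0 < P" using l_nonzero T(1) unfolding P_def by (auto intro: sum_pos2)
  have "P = (\<Sum>n\<in>T. (cmod (w n))\<^sup>2)" unfolding P_def by (rule sum.cong) (auto simp: w_T)
  also have "\<dots> \<le> (\<Sum>n\<in>F'. (cmod (w n))\<^sup>2)"
    by (rule sum_mono2) (use \<open>finite Fa\<close> T(2) in \<open>auto simp: F'_def Fa_def\<close>)
  finally have P_le: "P \<le> (\<Sum>n\<in>F'. (cmod (w n))\<^sup>2)" .
  have "0 \<le> c" using small sum_nonneg[of T "\<lambda>m. (norm (f m - lincomb f (a m) (F m)))\<^sup>2"]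
    by simp
  then have "c * P \<le> c * (\<Sum>n\<in>F'. (cmod (w n))\<^sup>2)" by (rule mult_left_mono[OF P_le])
  also have "\<dots> \<le> (norm (lincomb f w F'))\<^sup>2"
    by (rule riesz) (use \<open>finite Fa\<close> in \<open>auto simp: F'_def\<close>)
  also have "\<dots> \<le> P * (\<Sum>m\<in>T. (norm (f m - lincomb f (a m) (F m)))\<^sup>2)"
    unfolding residual[symmetric] P_def by (rule norm_weighted_sum_sq)
  also have "\<dots> < P * c" using \<open>0 < P\<close> small by simp
  finally show False by simp
qed

text \<open>If \<open>(f n)\<^sub>n\<^sub>\<notin>\<^sub>S\<close> is still a frame, then every \<open>f m\<close> can be approximated by combinations
  of frame vectors outside \<open>S\<close>; hence at most \<open>N\<close> deleted indices lie in the tail.\<close>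

lemma deleted_tail_card_bound:
  fixes f :: "nat \<Rightarrow> 'a::{complex_inner, complete_space}"
  assumes c0: "0 < c"
    and riesz: "\<And>F w. finite F \<Longrightarrow> F \<subseteq> {N..} \<Longrightarrow>
      c * (\<Sum>n\<in>F. (cmod (w n))\<^sup>2) \<le> (norm (lincomb f w F))\<^sup>2"
    and fr: "frame_on f (UNIV - S)"
    and T: "finite T" "T \<subseteq> S \<inter> {N..}"
  shows "card T \<le> N"
proof (cases "T = {}")
  case False
  define \<delta> where "\<delta> = sqrt (c / card T)"
  have "0 < card T" using T(1) False by (simp add: card_gt_0_iff)
  then have "0 < \<delta>" using c0 by (simp add: \<delta>_def)
  have "\<forall>m\<in>T. \<exists>a F. finite F \<and> F \<subseteq> UNIV - S \<and> norm (f m - lincomb f a F) < \<delta>"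
  proof
    fix m show "\<exists>a F. finite F \<and> F \<subseteq> UNIV - S \<and> norm (f m - lincomb f a F) < \<delta>"
      by (rule frame_span_dense[OF fr \<open>0 < \<delta>\<close>])
  qed
  from bchoice[OF this] obtain a where
    "\<forall>m\<in>T. \<exists>F. finite F \<and> F \<subseteq> UNIV - S \<and> norm (f m - lincomb f (a m) F) < \<delta>" ..
  from bchoice[OF this] obtain F where
    aF: "\<forall>m\<in>T. finite (F m) \<and> F m \<subseteq> UNIV - S \<and> norm (f m - lincomb f (a m) (F m)) < \<delta>" ..
  have "(\<Sum>m\<in>T. (norm (f m - lincomb f (a m) (F m)))\<^sup>2) < (\<Sum>m\<in>T. \<delta>\<^sup>2)"
    using T(1) False aF by (intro sum_strict_mono power_strict_mono) auto
  also have "\<dots> = c" using c0 \<open>0 < card T\<close> by (simp add: \<delta>_def)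
  finally have small: "(\<Sum>m\<in>T. (norm (f m - lincomb f (a m) (F m)))\<^sup>2) < c" .
  show ?thesis
    by (rule approximable_tail_card_bound[OF riesz T(1) _ _ small]) (use T(2) aF in auto)
qed simp

lemma finite_if_tail_subsets_bounded:
  fixes S :: "nat set"
  assumes bound: "\<And>T. finite T \<Longrightarrow> T \<subseteq> S \<inter> {N..} \<Longrightarrow> card T \<le> K"
  shows "finite S \<and> card S \<le> N + K"
proof -
  have fin: "finite (S \<inter> {N..})"
  proof (rule ccontr)
    assume "infinite (S \<inter> {N..})"
    then obtain T where "finite T" "card T = Suc K" "T \<subseteq> S \<inter> {N..}"
      using infinite_arbitrarily_large by blast
    with bound show False by fastforce
  qed
  have S: "S \<subseteq> {..<N} \<union> (S \<inter> {N..})" by auto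
  then have "card S \<le> card ({..<N} \<union> (S \<inter> {N..}))" using fin by (intro card_mono) auto
  also have "\<dots> \<le> N + K" using card_Un_le[of "{..<N}" "S \<inter> {N..}"] bound[OF fin] by simp
  finally show ?thesis using S fin finite_subset by blast
qed

text \<open>An infinite-dimensional space has a nonzero vector (otherwise \<open>cspan {}\<close> would be
  everything).\<close>

lemma infinite_dimensional_nontrivial:
  assumes "infinite_dimensional TYPE('a)"
  obtains x :: "'a::complex_vector" where "x \<noteq> 0"
proof -
  have "cspan ({}::'a set) \<noteq> UNIV" using assms unfolding infinite_dimensional_def by blast
  then show ?thesis using that by (auto simp: cspan_def)
qed

theorem proposition3p4:
  fixes f :: "nat \<Rightarrow> 'a::{complex_inner, complete_space}"
    and B :: real
  assumes "infinite_dimensional TYPE('a)"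
    and "separable_hilbert TYPE('a)"
    and "frame f"
    and "B = optimal_upper_frame_bound f"
    and "summable (\<lambda>n. B - (norm (f n))\<^sup>2)"
  shows "near_riesz_basis f"
proof -
  obtain x :: 'a where "x \<noteq> 0" using assms(1) by (rule infinite_dimensional_nontrivial)
  then have "0 < B" by (rule optimal_bound_pos[OF assms(3,4)])
  then obtain N where riesz: "\<And>F w. finite F \<Longrightarrow> F \<subseteq> {N..} \<Longrightarrow>
      B / 4 * (\<Sum>n\<in>F. (cmod (w n))\<^sup>2) \<le> (norm (lincomb f w F))\<^sup>2"
    by (rule tail_lower_riesz_bound[OF assms(3,4) _ assms(5)]) blast
  have "finite S \<and> card S \<le> N + N" if "frame_on f (UNIV - S)" for S
    using \<open>0 < B\<close>
    by (intro finite_if_tail_subsets_bounded deleted_tail_card_bound[OF _ riesz that]) simp_all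
  then show ?thesis using assms(3) unfolding near_riesz_basis_def by blast
qed

end
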